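(* Let $n\ge1$ and let $M$ be the set of maps $\mu:\{2,\dots,n+1\}\to\{1,\dots,n\}$ with $\mu(2)=1$ and $\mu(j)<j$ for all $j$. For each $\mu\in M$ there is a finite sequence of acceptable moves which transforms $\mu$ into an element of $M$ in upper echelon form.
   Context: An acceptable move on $\mu\in M$: if for some $j\in\{2,\dots,n\}$ one has $\mu(j+1)<\mu(j)$, replace $\mu$ by $(j,j+1)\circ\mu\circ(j,j+1)$, where $(j,j+1)$ is the transposition of $j$ and $j+1$. (Graphically, $\mu$ marks the entry $B_{\mu(m),m}$ in column $m$ of an upper triangular $n\times n$ array with rows $1,\dots,n$ and columns $2,\dots,n+1$; a move swaps the marked entries of columns $j$ and $j+1$ and simultaneously of rows $j$ and $j+1$.) $\mu$ is in upper echelon form if every marked entry in a higher row lies to the left of every marked entry in a lower row, i.e. $\mu(m)<\mu(m')$ implies $m<m'$ (equivalently, $\mu$ is nondecreasing). *)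

theory Defs
  imports "HOL-Combinatorics.Transposition"
begin

text \<open>Maps mu : {2..n+1} -> {1..n} are represented as functions nat => nat that are
  0 outside the domain {2..n+1} (extensional convention).\<close>

definition M :: "nat \<Rightarrow> (nat \<Rightarrow> nat) set" where
  "M n = {\<mu>. (\<forall>m. m \<notin> {2..n+1} \<longrightarrow> \<mu> m = 0)
              \<and> (\<forall>m\<in>{2..n+1}. \<mu> m \<in> {1..n})
              \<and> \<mu> 2 = 1
              \<and> (\<forall>j\<in>{2..n+1}. \<mu> j < j)}"

definition acceptable_move :: "nat \<Rightarrow> (nat \<Rightarrow> nat) \<Rightarrow> (nat \<Rightarrow> nat) \<Rightarrow> bool" where
  "acceptable_move n \<mu> \<mu>' \<longleftrightarrow> \<mu> \<in> M n \<and>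
     (\<exists>j\<in>{2..n}. \<mu> (j+1) < \<mu> j \<and>
        \<mu>' = transpose j (j+1) \<circ> \<mu> \<circ> transpose j (j+1))"

definition upper_echelon :: "nat \<Rightarrow> (nat \<Rightarrow> nat) \<Rightarrow> bool" where
  "upper_echelon n \<mu> \<longleftrightarrow> (\<forall>m\<in>{2..n+1}. \<forall>m'\<in>{2..n+1}. \<mu> m < \<mu> m' \<longrightarrow> m < m')"

end

theory Submission
  imports Defs
begin

text \<open>A move at \<open>j\<close> does not change the entries in columns \<open>2, \<dots>, j - 1\<close> (they point to
  rows below \<open>j\<close>) and replaces the entry in column \<open>j\<close> by the smaller value \<open>\<mu> (j + 1)\<close>.
  Hence every move strictly decreases the word \<open>\<mu> 2 \<dots> \<mu> (n + 1)\<close> lexicographically, so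
  every sequence of moves terminates. A map admitting no move is nondecreasing on
  \<open>{2..n+1}\<close>, i.e.\ in upper echelon form.\<close>

lemma rtranclp_reaches_normal_form:
  assumes "wf {(y, x). R x y}"
  shows "\<exists>y. R\<^sup>*\<^sup>* x y \<and> (\<forall>z. \<not> R y z)"
  using assms
proof (induction x rule: wf_induct_rule)
  case (less x)
  show ?case
  proof (cases "\<exists>z. R x z")
    case True
    then obtain z where "R x z" by blast
    with less.IH obtain y where "R\<^sup>*\<^sup>* z y" "\<forall>z. \<not> R y z" by blast
    with \<open>R x z\<close> show ?thesis by (meson converse_rtranclp_into_rtranclp)
  qed blast
qed

lemma map_upt_lex_less:
  fixes f g :: "nat \<Rightarrow> 'a::order"
  assumes "a \<le> j" "j < b" "\<forall>m\<in>{a..<j}. f m = g m" "f j < g j"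
  shows "(map f [a..<b], map g [a..<b]) \<in> lex {(x, y). x < y}"
proof -
  have split: "[a..<b] = [a..<j] @ j # [Suc j..<b]"
    using assms(1,2) upt_add_eq_append[of a j "b - j"] by (simp add: upt_conv_Cons)
  have "map f [a..<j] = map g [a..<j]"
    using assms(3) by simp
  moreover have "(f j # map f [Suc j..<b], g j # map g [Suc j..<b]) \<in> lex {(x, y). x < y}"
    using assms(4) by simp
  ultimately show ?thesis
    unfolding split map_append list.map by (metis lex_append_leftI)
qed

lemma upper_echelonI:
  assumes mono: "\<forall>j\<in>{2..n}. \<mu> j \<le> \<mu> (j + 1)"
  shows "upper_echelon n \<mu>"
  unfolding upper_echelon_def
proof (intro ballI impI)
  fix m m' assume m: "m \<in> {2..n+1}" and m': "m' \<in> {2..n+1}" and less: "\<mu> m < \<mu> m'"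
  have "\<mu> m' \<le> \<mu> k" if "m' \<le> k" "k \<le> n + 1" for k
    using that
  proof (induction k rule: dec_induct)
    case (step k)
    then have "\<mu> k \<le> \<mu> (k + 1)"
      using mono m' by simp
    with step show ?case by simp
  qed simp
  with m less show "m < m'"
    by (meson atLeastAtMost_iff not_le not_less_iff_gr_or_eq)
qed

lemma M_memD:
  assumes "\<mu> \<in> M n"
  shows "m \<notin> {2..n+1} \<Longrightarrow> \<mu> m = 0" and "m \<in> {2..n+1} \<Longrightarrow> 1 \<le> \<mu> m"
    and "m \<in> {2..n+1} \<Longrightarrow> \<mu> m < m" and "\<mu> 2 = 1"
  using assms unfolding M_def by auto

text \<open>No move happens at \<open>j = 2\<close>, because \<open>\<mu> 3 \<ge> 1 = \<mu> 2\<close>.\<close>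

lemma acceptable_moveE:
  assumes "acceptable_move n \<mu> \<nu>"
  obtains j where "\<mu> \<in> M n" "3 \<le> j" "j \<le> n" "\<mu> (j + 1) < \<mu> j"
    "\<nu> j = \<mu> (j + 1)" "\<nu> (j + 1) = \<mu> j"
    "\<And>m. m \<noteq> j \<Longrightarrow> m \<noteq> j + 1 \<Longrightarrow> \<nu> m = transpose j (j + 1) (\<mu> m)"
proof -
  from assms obtain j where \<mu>: "\<mu> \<in> M n" and j: "j \<in> {2..n}" "\<mu> (j + 1) < \<mu> j"
    and \<nu>: "\<nu> = transpose j (j + 1) \<circ> \<mu> \<circ> transpose j (j + 1)"
    unfolding acceptable_move_def by blast
  have "j \<noteq> 2"
    using j M_memD(2)[OF \<mu>, of 3] M_memD(4)[OF \<mu>] by auto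
  moreover have "\<mu> j < j"
    using j M_memD(3)[OF \<mu>, of j] by simp
  ultimately show thesis
    using j by (intro that[OF \<mu>]) (auto simp: \<nu> transpose_def)
qed

lemma acceptable_move_in_M:
  assumes "acceptable_move n \<mu> \<nu>"
  shows "\<nu> \<in> M n"
proof -
  obtain j where \<mu>: "\<mu> \<in> M n" and j: "3 \<le> j" "j \<le> n" "\<mu> (j + 1) < \<mu> j"
    and \<nu>_j: "\<nu> j = \<mu> (j + 1)" "\<nu> (j + 1) = \<mu> j"
    and \<nu>_other: "\<And>m. m \<noteq> j \<Longrightarrow> m \<noteq> j + 1 \<Longrightarrow> \<nu> m = transpose j (j + 1) (\<mu> m)"
    using acceptable_moveE[OF assms] by blast
  have "1 \<le> \<nu> m \<and> \<nu> m < m" if m: "m \<in> {2..n+1}" for m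
  proof (cases "m = j \<or> m = j + 1")
    case True
    with j \<nu>_j show ?thesis
      using M_memD(2,3)[OF \<mu>, of j] M_memD(2,3)[OF \<mu>, of "j + 1"] by auto
  next
    case False
    then have "\<nu> m = transpose j (j + 1) (\<mu> m)"
      using \<nu>_other by blast
    moreover have "\<mu> m \<noteq> j \<or> j + 1 < m"
      using False M_memD(3)[OF \<mu> m] by auto
    ultimately show ?thesis
      using M_memD(2,3)[OF \<mu> m] j by (auto simp: transpose_def)
  qed
  moreover have "\<nu> m = 0" if "m \<notin> {2..n+1}" for m
    using that j \<nu>_other[of m] M_memD(1)[OF \<mu> that] by (auto simp: transpose_def)
  moreover have "\<nu> 2 = 1"
    using j \<nu>_other[of 2] M_memD(4)[OF \<mu>] by (simp add: transpose_def)
  ultimately show ?thesis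
    unfolding M_def by fastforce
qed

lemma acceptable_move_lex_less:
  assumes "acceptable_move n \<mu> \<nu>"
  shows "(map \<nu> [2..<n+2], map \<mu> [2..<n+2]) \<in> lex {(x, y). x < y}"
proof -
  obtain j where \<mu>: "\<mu> \<in> M n" and j: "3 \<le> j" "j \<le> n" "\<mu> (j + 1) < \<mu> j"
    and \<nu>_j: "\<nu> j = \<mu> (j + 1)"
    and \<nu>_other: "\<And>m. m \<noteq> j \<Longrightarrow> m \<noteq> j + 1 \<Longrightarrow> \<nu> m = transpose j (j + 1) (\<mu> m)"
    using acceptable_moveE[OF assms] by blast
  have "\<nu> m = \<mu> m" if "m \<in> {2..<j}" for m
    using that j \<nu>_other[of m] M_memD(3)[OF \<mu>, of m] by (simp add: transpose_def)
  then show ?thesis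
    using j \<nu>_j by (intro map_upt_lex_less[where j = j]) auto
qed

lemma acceptable_move_if_not_upper_echelon:
  assumes "\<mu> \<in> M n" "\<not> upper_echelon n \<mu>"
  shows "\<exists>\<nu>. acceptable_move n \<mu> \<nu>"
  using assms upper_echelonI unfolding acceptable_move_def by (meson not_le)

theorem lemma3p2:
  fixes n :: nat and \<mu> :: "nat \<Rightarrow> nat"
  assumes "n \<ge> 1" and "\<mu> \<in> M n"
  shows "\<exists>\<nu>. (acceptable_move n)\<^sup>*\<^sup>* \<mu> \<nu> \<and> \<nu> \<in> M n \<and> upper_echelon n \<nu>"
proof -
  have "{(\<nu>, \<mu>). acceptable_move n \<mu> \<nu>} \<subseteq> inv_image (lex {(x, y). x < y}) (\<lambda>\<mu>. map \<mu> [2..<n+2])"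
    using acceptable_move_lex_less by fastforce
  then have "wf {(\<nu>, \<mu>). acceptable_move n \<mu> \<nu>}"
    by (rule wf_subset[OF wf_inv_image[OF wf_lex[OF wf_less]]])
  then obtain \<nu> where steps: "(acceptable_move n)\<^sup>*\<^sup>* \<mu> \<nu>"
    and final: "\<forall>\<nu>'. \<not> acceptable_move n \<nu> \<nu>'"
    using rtranclp_reaches_normal_form by fast
  have "\<nu> \<in> M n"
    using steps by (rule rtranclp.cases) (use assms(2) acceptable_move_in_M in auto)
  with steps final show ?thesis
    using acceptable_move_if_not_upper_echelon by blast
qed

end
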